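(* Let $a$ be a positive integer. The number of distinct $c$-triangles in $\Gamma$ having $a$ as a vertex equals the number of allowable pairs $(m,n)$ satisfying $m^3+2m^2n+mn^2+n^3=a$.
   Context: An allowable pair is $(m,n)\in\mathbb{Z}^2$ with $\gcd(m,n)=1$ and $mn(m+n)\neq0$. Let $t_1(m,n)=m^3+2m^2n+mn^2+n^3$, $t_2(m,n)=m^3-mn^2-n^3$, $t_3(m,n)=m^3+2m^2n+3mn^2+n^3$. For an allowable pair, $c=-A(m,n)/B(m,n)$ with $A(m,n)=m^6+2m^5n+4m^4n^2+8m^3n^3+9m^2n^4+4mn^5+n^6$, $B(m,n)=4m^2n^2(m+n)^2$; these are exactly the rational $c$ for which $f_c(x)=x^2+c$ has a rational $3$-cycle, and the cycle is $\{\frac{t_1}{2mn(m+n)},\frac{t_2}{2mn(m+n)},-\frac{t_3}{2mn(m+n)}\}$ in lowest terms. The graph $\Gamma$ has vertex set the positive integers, with an edge between $a\neq b$ iff there is an allowable pair $(m,n)$ and $i\neq j$ in $\{1,2,3\}$ with $a=|t_i(m,n)|$, $b=|t_j(m,n)|$. For such $c$, the $c$-triangle is the triangle of $\Gamma$ with vertices $|t_1(m,n)|,|t_2(m,n)|,|t_3(m,n)|$ (the absolute values of the numerators of the $3$-cycle of $f_c$); distinct $c$-triangles means $c$-triangles for distinct values of $c$. *)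

theory Defs
  imports Complex_Main
begin

definition allowable :: "int \<Rightarrow> int \<Rightarrow> bool" where
  "allowable m n \<longleftrightarrow> gcd m n = 1 \<and> m * n * (m + n) \<noteq> 0"

definition t1 :: "int \<Rightarrow> int \<Rightarrow> int" where
  "t1 m n = m^3 + 2*m^2*n + m*n^2 + n^3"

definition t2 :: "int \<Rightarrow> int \<Rightarrow> int" where
  "t2 m n = m^3 - m*n^2 - n^3"

definition t3 :: "int \<Rightarrow> int \<Rightarrow> int" where
  "t3 m n = m^3 + 2*m^2*n + 3*m*n^2 + n^3"

definition Apoly :: "int \<Rightarrow> int \<Rightarrow> int" where
  "Apoly m n = m^6 + 2*m^5*n + 4*m^4*n^2 + 8*m^3*n^3 + 9*m^2*n^4 + 4*m*n^5 + n^6"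

definition Bpoly :: "int \<Rightarrow> int \<Rightarrow> int" where
  "Bpoly m n = 4*m^2*n^2*(m+n)^2"

definition cval :: "int \<Rightarrow> int \<Rightarrow> rat" where
  "cval m n = - (of_int (Apoly m n) / of_int (Bpoly m n))"

definition c_triangle :: "int \<Rightarrow> int \<Rightarrow> int set" where
  "c_triangle m n = {\<bar>t1 m n\<bar>, \<bar>t2 m n\<bar>, \<bar>t3 m n\<bar>}"

end

theory Submission
  imports Defs
begin

text \<open>
  The six pairs \<open>\<pm>(m, n)\<close>, \<open>\<pm>(-(m+n), m)\<close>, \<open>\<pm>(n, -(m+n))\<close> describe the same
  3-cycle, rotated and with all signs flipped, so they give the same \<open>c\<close>; along them \<open>t\<^sub>1\<close>
  runs through \<open>\<pm>t\<^sub>1, \<pm>t\<^sub>2, \<pm>t\<^sub>3\<close>. Hence every \<open>c\<close>-triangle with vertex \<open>a\<close> comes from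
  a pair with \<open>t\<^sub>1 = a\<close>. Conversely \<open>-A/B\<close> is in lowest terms, so \<open>c\<close> determines \<open>A\<close> and
  \<open>B = (2mn(m+n))\<^sup>2\<close>; the cycle relations \<open>x\<^sub>i\<^sup>2 + c = x\<^sub>i\<^sub>+\<^sub>1\<close> then recover \<open>mn(m+n)\<close>,
  \<open>t\<^sub>2\<close> and \<open>t\<^sub>3\<close> from \<open>t\<^sub>1 = a \<noteq> 0\<close>, and these determine \<open>(m, n)\<close>.
\<close>

lemma coprime_mult_add_power:
  fixes m n k :: "'a::ring_gcd"
  assumes "coprime m n"
  shows "coprime (k * m + n ^ j) m"
proof -
  have "coprime m (n ^ j)" using assms by simp
  then show ?thesis by (simp add: coprime_iff_gcd_eq_1 gcd.commute[of _ m] gcd_add_mult)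
qed

lemma quotient_of_int_div:
  assumes "b > 0" "coprime a b"
  shows "quotient_of (of_int a / of_int b) = (a, b)"
  using assms by (simp flip: Fract_of_int_quotient add: quotient_of_Fract)

lemma allowable_coprime: "allowable m n \<Longrightarrow> coprime m n"
  unfolding allowable_def by (simp add: coprime_iff_gcd_eq_1)

lemma allowable_nonzero: "allowable m n \<Longrightarrow> m * n * (m + n) \<noteq> 0"
  unfolding allowable_def by simp

lemma allowable_neg: "allowable m n \<Longrightarrow> allowable (-m) (-n)"
  unfolding allowable_def by (simp add: algebra_simps)

lemma allowable_rotate: "allowable m n \<Longrightarrow> allowable (-(m+n)) m"
proof -
  assume "allowable m n"
  moreover have "gcd (-(m+n)) m = gcd n m"
    by (metis gcd_neg1_int gcd_add2 gcd.commute)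
  ultimately show ?thesis unfolding allowable_def by (simp add: gcd.commute algebra_simps)
qed

lemma cval_neg: "cval (-m) (-n) = cval m n"
proof -
  have "Apoly (-m) (-n) = Apoly m n" unfolding Apoly_def by algebra
  moreover have "Bpoly (-m) (-n) = Bpoly m n" unfolding Bpoly_def by algebra
  ultimately show ?thesis unfolding cval_def by simp
qed

lemma cval_rotate: "cval (-(m+n)) m = cval m n"
proof -
  have "Apoly (-(m+n)) m = Apoly m n" unfolding Apoly_def by algebra
  moreover have "Bpoly (-(m+n)) m = Bpoly m n" unfolding Bpoly_def by algebra
  ultimately show ?thesis unfolding cval_def by simp
qed

lemma t1_neg: "t1 (-m) (-n) = - t1 m n" unfolding t1_def by algebra
lemma t1_rotate: "t1 (-(m+n)) m = t2 m n" unfolding t1_def t2_def by algebra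
lemma t2_rotate: "t2 (-(m+n)) m = - t3 m n" unfolding t2_def t3_def by algebra

lemma exists_pair_t1_eq_cycle_numerator:
  assumes "allowable m n" and "b = t1 m n \<or> b = t2 m n \<or> b = - t3 m n"
  shows "\<exists>m' n'. allowable m' n' \<and> cval m' n' = cval m n \<and> t1 m' n' = b"
  using assms allowable_rotate[OF allowable_rotate[OF assms(1)]] allowable_rotate[OF assms(1)]
  by (metis cval_rotate t1_rotate t2_rotate)

lemma exists_pair_t1_eq_vertex:
  assumes "allowable m n" and "a > 0" and "a \<in> c_triangle m n"
  shows "\<exists>m' n'. allowable m' n' \<and> cval m' n' = cval m n \<and> t1 m' n' = a"
proof -
  have "\<bar>t3 m n\<bar> = \<bar>- t3 m n\<bar>" by simp
  then obtain b where b: "b = t1 m n \<or> b = t2 m n \<or> b = - t3 m n" and "a = \<bar>b\<bar>"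
    using assms(3) unfolding c_triangle_def by blast
  then have ab: "a = b \<or> a = - b" by linarith
  obtain m' n' where m'n': "allowable m' n'" "cval m' n' = cval m n" "t1 m' n' = b"
    using exists_pair_t1_eq_cycle_numerator[OF assms(1) b] by blast
  show ?thesis
  proof (cases "a = b")
    case True
    with m'n' show ?thesis by blast
  next
    case False
    with ab m'n'(3) have "t1 (-m') (-n') = a" by (simp add: t1_neg)
    with allowable_neg[OF m'n'(1)] m'n'(2) show ?thesis by (metis cval_neg)
  qed
qed

lemma allowable_not_both_even: "allowable m n \<Longrightarrow> odd m \<or> odd n"
  unfolding allowable_def by (metis gcd_greatest_iff odd_one)

lemma Apoly_odd:
  assumes "allowable m n"
  shows "odd (Apoly m n)"
proof -
  have "Apoly m n = (m^6 + m^2*n^4 + n^6)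
      + 2*(m^5*n + 2*m^4*n^2 + 4*m^3*n^3 + 4*m^2*n^4 + 2*m*n^5)"
    unfolding Apoly_def by algebra
  moreover have "odd (m^6 + m^2*n^4 + n^6)"
    using allowable_not_both_even[OF assms] by (cases "even m") auto
  ultimately show ?thesis by (metis dvd_add_left_iff dvd_triv_left)
qed

lemma Apoly_Bpoly_coprime:
  assumes "allowable m n"
  shows "coprime (Apoly m n) (Bpoly m n)"
proof -
  have cmn: "coprime m n" using allowable_coprime[OF assms] .
  have "Apoly m n = (m^5 + 2*m^4*n + 4*m^3*n^2 + 8*m^2*n^3 + 9*m*n^4 + 4*n^5) * m + n^6"
    unfolding Apoly_def by algebra
  then have "coprime (Apoly m n) m"
    using coprime_mult_add_power[OF cmn] by simp
  moreover have "Apoly m n = (2*m^5 + 4*m^4*n + 8*m^3*n^2 + 9*m^2*n^3 + 4*m*n^4 + n^5) * n + m^6"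
    unfolding Apoly_def by algebra
  then have "coprime (Apoly m n) n"
    using coprime_mult_add_power[of n m] cmn by (simp add: coprime_commute)
  moreover have "Apoly m n = ((m+n)^5 - 4*(m+n)^4*n + 9*(m+n)^3*n^2 - 8*(m+n)^2*n^3
      + 4*(m+n)*n^4 - 2*n^5) * (m + n) + n^6"
    unfolding Apoly_def by algebra
  moreover have "coprime (m + n) n"
    using cmn by (simp add: coprime_iff_gcd_eq_1)
  ultimately have "coprime (Apoly m n) (m * n * (m + n))"
    using coprime_mult_add_power[of "m + n" n] by simp
  moreover have "coprime (Apoly m n) 2"
    using Apoly_odd[OF assms] by (simp add: coprime_commute)
  ultimately have "coprime (Apoly m n) (2^2 * (m*n*(m+n))^2)"
    by (simp only: coprime_mult_right_iff coprime_power_right_iff) simp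
  moreover have "Bpoly m n = 2^2 * (m*n*(m+n))^2" unfolding Bpoly_def by algebra
  ultimately show ?thesis by simp
qed

lemma Bpoly_pos: "allowable m n \<Longrightarrow> Bpoly m n > 0"
  unfolding Bpoly_def allowable_def by simp

lemma cval_eqD:
  assumes "allowable m n" and "allowable m' n'" and "cval m n = cval m' n'"
  shows "Apoly m n = Apoly m' n'" and "Bpoly m n = Bpoly m' n'"
proof -
  have "quotient_of (- cval m n) = (Apoly m n, Bpoly m n)" if "allowable m n" for m n
    unfolding cval_def using quotient_of_int_div Bpoly_pos Apoly_Bpoly_coprime that by simp
  from this[OF assms(1)] this[OF assms(2)] assms(3)
  have "(Apoly m n, Bpoly m n) = (Apoly m' n', Bpoly m' n')" by simp
  then show "Apoly m n = Apoly m' n'" and "Bpoly m n = Bpoly m' n'" by simp_all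
qed

text \<open>With \<open>D = 2mn(m+n)\<close> these are \<open>x\<^sub>1\<^sup>2 + c = x\<^sub>2\<close>, \<open>x\<^sub>2\<^sup>2 + c = x\<^sub>3\<close>, \<open>x\<^sub>3\<^sup>2 + c = x\<^sub>1\<close> for
  the cycle \<open>x\<^sub>1 = t\<^sub>1/D\<close>, \<open>x\<^sub>2 = t\<^sub>2/D\<close>, \<open>x\<^sub>3 = -t\<^sub>3/D\<close>, multiplied by \<open>D\<^sup>2 = B\<close>.\<close>

lemma t1_sq_minus_Apoly: "t1 m n ^ 2 - Apoly m n = 2 * (m*n*(m+n)) * t2 m n"
  unfolding t1_def t2_def Apoly_def by algebra

lemma t2_sq_minus_Apoly: "t2 m n ^ 2 - Apoly m n = - 2 * (m*n*(m+n)) * t3 m n"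
  unfolding t3_def t2_def Apoly_def by algebra

lemma t3_sq_minus_Apoly: "t3 m n ^ 2 - Apoly m n = 2 * (m*n*(m+n)) * t1 m n"
  unfolding t1_def t3_def Apoly_def by algebra

lemma cval_t1_determine_cycle:
  assumes "allowable m n" and "allowable m' n'" and "cval m n = cval m' n'"
    and "t1 m n = t1 m' n'" and "t1 m n \<noteq> 0"
  shows "m*n*(m+n) = m'*n'*(m'+n')" and "t2 m n = t2 m' n'" and "t3 m n = t3 m' n'"
proof -
  define P where "P = m*n*(m+n)"
  define P' where "P' = m'*n'*(m'+n')"
  have P: "P \<noteq> 0" using allowable_nonzero[OF assms(1)] by (simp add: P_def)
  note A = cval_eqD(1)[OF assms(1-3)]
  have "P^2 = P'^2"
    using cval_eqD(2)[OF assms(1-3)] unfolding Bpoly_def P_def P'_def by algebra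
  then have "P' = P \<or> P' = - P" by (metis power2_eq_iff)
  then obtain s :: int where s: "s^2 = 1" and P': "P' = s * P"
    using that[of 1] that[of "-1"] by auto
  have sq: "(s * x)^2 = x^2" for x using s by (simp add: power_mult_distrib)
  have s_cancel: "y = s * x" if "P * x = P' * y" for x y
  proof -
    from that P' P have "x = s * y" by (simp add: mult.left_commute)
    then show ?thesis using s by (simp add: power2_eq_square flip: mult.assoc)
  qed
  have t2: "t2 m' n' = s * t2 m n"
    using t1_sq_minus_Apoly[of m n] t1_sq_minus_Apoly[of m' n'] A assms(4) s_cancel
    unfolding P_def P'_def by auto
  have t3: "t3 m' n' = s * t3 m n"
    using t2_sq_minus_Apoly[of m n] t2_sq_minus_Apoly[of m' n'] A t2 sq s_cancel
    unfolding P_def P'_def by auto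
  have "t1 m' n' = s * t1 m n"
    using t3_sq_minus_Apoly[of m n] t3_sq_minus_Apoly[of m' n'] A t3 sq s_cancel
    unfolding P_def P'_def by auto
  with assms(4,5) have "s = 1" by simp
  with P' t2 t3 show "m*n*(m+n) = m'*n'*(m'+n')" "t2 m n = t2 m' n'" "t3 m n = t3 m' n'"
    by (simp_all add: P_def P'_def)
qed

lemma cycle_determines_pair:
  assumes "allowable m n" and "allowable m' n'"
    and "m*n*(m+n) = m'*n'*(m'+n')" and "t1 m n = t1 m' n'"
    and "t2 m n = t2 m' n'" and "t3 m n = t3 m' n'"
  shows "m = m'" and "n = n'"
proof -
  have "t1 m n + t2 m n = 2 * (m^2*(m+n))" "t1 m' n' + t2 m' n' = 2 * (m'^2*(m'+n'))"
    unfolding t1_def t2_def by algebra+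
  then have u: "m^2*(m+n) = m'^2*(m'+n')" using assms(4,5) by simp
  have "t3 m n - t1 m n = 2 * (m*n^2)" "t3 m' n' - t1 m' n' = 2 * (m'*n'^2)"
    unfolding t1_def t3_def by algebra+
  then have v: "m*n^2 = m'*n'^2" using assms(4,6) by simp
  txt \<open>\<open>m/n = m\<^sup>2(m+n) / mn(m+n)\<close>, so the ratio \<open>m : n\<close> is determined.\<close>
  have "(m*n*(m+n)) * (m*n') = (m*n*(m+n)) * (m'*n)"
    using assms(3) u by algebra
  then have cross: "m*n' = m'*n" using allowable_nonzero[OF assms(1)] by simp
  then have "m dvd m'" "m' dvd m"
    using allowable_coprime[OF assms(1)] allowable_coprime[OF assms(2)]
    by (metis coprime_dvd_mult_left_iff dvd_triv_left)+
  then have "m' = m \<or> m' = -m" using zdvd_antisym_abs by fastforce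
  moreover have m: "m \<noteq> 0" and n: "n \<noteq> 0" using allowable_nonzero[OF assms(1)] by auto
  moreover have "m' \<noteq> -m"
  proof
    assume "m' = -m"
    with cross have "m * n' = m * (-n)" by simp
    with m have "n' = -n" by (simp only: mult_cancel_left) simp
    with v \<open>m' = -m\<close> have "m * n^2 = 0" by simp
    with m n show False by simp
  qed
  ultimately show "m = m'" and "n = n'" using cross by auto
qed

lemma cval_inj_on_t1_fibre:
  assumes "a \<noteq> 0"
  shows "inj_on (\<lambda>p. cval (fst p) (snd p)) {p. allowable (fst p) (snd p) \<and> t1 (fst p) (snd p) = a}"
proof (rule inj_onI)
  fix p q
  assume "p \<in> {p. allowable (fst p) (snd p) \<and> t1 (fst p) (snd p) = a}"
    and "q \<in> {p. allowable (fst p) (snd p) \<and> t1 (fst p) (snd p) = a}"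
    and "cval (fst p) (snd p) = cval (fst q) (snd q)"
  with assms cval_t1_determine_cycle[of "fst p" "snd p" "fst q" "snd q"]
  have "fst p = fst q" and "snd p = snd q"
    using cycle_determines_pair[of "fst p" "snd p" "fst q" "snd q"] by simp_all
  then show "p = q" by (simp add: prod_eq_iff)
qed

theorem theorem10:
  fixes a :: int
  assumes "a > 0"
  shows "card {c :: rat. \<exists>m n. allowable m n \<and> cval m n = c \<and> a \<in> c_triangle m n}
       = card {p :: int \<times> int. allowable (fst p) (snd p) \<and> t1 (fst p) (snd p) = a}"
proof -
  let ?S = "{p :: int \<times> int. allowable (fst p) (snd p) \<and> t1 (fst p) (snd p) = a}"
  have "{c :: rat. \<exists>m n. allowable m n \<and> cval m n = c \<and> a \<in> c_triangle m n}
        = (\<lambda>p. cval (fst p) (snd p)) ` ?S"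
  proof (intro set_eqI iffI)
    fix c assume "c \<in> {c. \<exists>m n. allowable m n \<and> cval m n = c \<and> a \<in> c_triangle m n}"
    then show "c \<in> (\<lambda>p. cval (fst p) (snd p)) ` ?S"
      using exists_pair_t1_eq_vertex[OF _ assms] by (force simp: image_iff)
  next
    fix c assume "c \<in> (\<lambda>p. cval (fst p) (snd p)) ` ?S"
    then show "c \<in> {c. \<exists>m n. allowable m n \<and> cval m n = c \<and> a \<in> c_triangle m n}"
      using assms by (force simp: c_triangle_def)
  qed
  then show ?thesis
    using card_image[OF cval_inj_on_t1_fibre] assms by simp
qed

end
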